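(* Let $p\ne q$ be primes, $G=\mathbb{Z}_p^2\times\mathbb{Z}_q^2$, and let $S\subseteq G$ be spectral with $\gcd(|S|,p^2q^2)=pq$ and $pq<|S|<pq\min\{p,q\}$. Then there exist nonzero $u\in\mathbb{Z}_p^2$ and nonzero $v\in\mathbb{Z}_q^2$ such that $\lambda u\notin S-S$ for every $\lambda\in\mathbb{Z}_p\setminus\{0\}$ and $\mu v\notin S-S$ for every $\mu\in\mathbb{Z}_q\setminus\{0\}$.
   Context: $\mathbb{Z}_p^2$ and $\mathbb{Z}_q^2$ are regarded as subgroups of $G$ (elements $(u,0)$ and $(0,v)$). For $w=(u,v)\in G$ define $\chi_w(a,b)=\exp\big(2\pi i(\tfrac{u\cdot a}{p}+\tfrac{v\cdot b}{q})\big)$ and $\chi(S)=\sum_{s\in S}\chi(s)$. $S$ is spectral if there is $\Lambda\subseteq G$ with $|\Lambda|=|S|$ and $\chi_{\lambda-\lambda'}(S)=0$ for all distinct $\lambda,\lambda'\in\Lambda$. *)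

theory Defs
  imports "HOL-Analysis.Analysis" "HOL-Computational_Algebra.Primes"
begin

text \<open>The group G = Z_p^2 x Z_q^2, elements represented as ((a1,a2),(b1,b2))
  with canonical representatives a_i in {0..<p}, b_i in {0..<q}.\<close>

type_synonym elt = "(int \<times> int) \<times> (int \<times> int)"

definition grp :: "int \<Rightarrow> int \<Rightarrow> elt set" where
  "grp p q = ({0..<p} \<times> {0..<p}) \<times> ({0..<q} \<times> {0..<q})"

definition gsub :: "int \<Rightarrow> int \<Rightarrow> elt \<Rightarrow> elt \<Rightarrow> elt" where
  "gsub p q x y =
     (((fst (fst x) - fst (fst y)) mod p, (snd (fst x) - snd (fst y)) mod p),
      ((fst (snd x) - fst (snd y)) mod q, (snd (snd x) - snd (snd y)) mod q))"

definition chr :: "int \<Rightarrow> int \<Rightarrow> elt \<Rightarrow> elt \<Rightarrow> complex" where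
  "chr p q w x = cis (2 * pi *
     (of_int (fst (fst w) * fst (fst x) + snd (fst w) * snd (fst x)) / of_int p +
      of_int (fst (snd w) * fst (snd x) + snd (snd w) * snd (snd x)) / of_int q))"

definition chr_sum :: "int \<Rightarrow> int \<Rightarrow> elt \<Rightarrow> elt set \<Rightarrow> complex" where
  "chr_sum p q w S = (\<Sum>s\<in>S. chr p q w s)"

definition spectral :: "int \<Rightarrow> int \<Rightarrow> elt set \<Rightarrow> bool" where
  "spectral p q S \<longleftrightarrow> (\<exists>\<Lambda>. \<Lambda> \<subseteq> grp p q \<and> card \<Lambda> = card S \<and>
     (\<forall>l\<in>\<Lambda>. \<forall>l'\<in>\<Lambda>. l \<noteq> l' \<longrightarrow> chr_sum p q (gsub p q l l') S = 0))"

definition diffset :: "int \<Rightarrow> int \<Rightarrow> elt set \<Rightarrow> elt set" where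
  "diffset p q S = {gsub p q x y | x y. x \<in> S \<and> y \<in> S}"

end

theory Submission
  imports Defs "Jordan_Normal_Form.Char_Poly"
begin

text \<open>If \<open>\<Lambda>\<close> is a spectrum of S, the character matrix \<open>(\<chi>\<^sub>\<lambda>(s))\<close> is \<open>\<surd>|S|\<close> times
  a unitary matrix, so its columns are orthogonal as well: \<open>\<chi>(d)\<close> sums to 0 over \<open>\<Lambda>\<close>
  for every nonzero \<open>d \<in> S - S\<close>. If every line \<open>{\<lambda>u}\<close> of \<open>\<int>\<^sub>p\<^sup>2\<close> met \<open>S - S\<close>,
  the Fourier transform of the projection of \<open>\<Lambda>\<close> to \<open>\<int>\<^sub>p\<^sup>2\<close> would vanish at some
  nonzero point of every line, hence (the Galois group of \<open>\<rat>(\<zeta>\<^sub>p)\<close> acting transitively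
  on the nonzero points of a line) at every nonzero point. Fourier inversion then gives
  \<open>p\<^sup>2 dvd |\<Lambda>| = |S|\<close>, which the gcd condition excludes. The same argument works
  for \<open>\<int>\<^sub>q\<^sup>2\<close>.\<close>

section \<open>Roots of unity\<close>

lemma sum_atLeast0_lessThan_int:
  assumes "n \<ge> 0"
  shows "(\<Sum>j\<in>{0..<n}. f j) = (\<Sum>k<nat n. f (int k))"
proof -
  have "{0..<n} = int ` {..<nat n}"
    using assms by (simp add: image_int_atLeastLessThan flip: atLeast0LessThan)
  then show ?thesis
    by (simp add: sum.reindex)
qed

definition zeta :: "int \<Rightarrow> int \<Rightarrow> complex" where
  "zeta n a = cis (2 * pi * of_int a / of_int n)"

lemma zeta_add: "zeta n (a + b) = zeta n a * zeta n b"
  by (simp add: zeta_def cis_mult add_divide_distrib distrib_left)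

lemma zeta_uminus: "zeta n (- a) = cnj (zeta n a)"
  by (simp add: zeta_def cis_cnj)

lemma zeta_diff: "zeta n (a - b) = zeta n a * cnj (zeta n b)"
  using zeta_add[of n a "- b"] by (simp add: zeta_uminus)

lemma zeta_0 [simp]: "zeta n 0 = 1"
  by (simp add: zeta_def)

lemma zeta_multiple: "zeta n (n * k) = 1"
proof (cases "n = 0")
  case False
  then have "2 * pi * of_int (n * k) / of_int n = 2 * pi * of_int k"
    by simp
  then show ?thesis
    by (simp add: zeta_def cis_multiple_2pi)
qed simp

lemma zeta_self [simp]: "zeta n n = 1"
  using zeta_multiple[of n 1] by simp

lemma zeta_mod_eq:
  assumes "a mod n = b mod n"
  shows "zeta n a = zeta n b"
proof -
  obtain k where "a = b + n * k"
    using assms mod_eq_dvd_iff[of a n b] by (auto simp: dvd_def algebra_simps)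
  then show ?thesis
    by (simp add: zeta_add zeta_multiple)
qed

lemma zeta_mod [simp]: "zeta n (a mod n) = zeta n a"
  by (rule zeta_mod_eq) simp

lemma norm_zeta [simp]: "norm (zeta n a) = 1"
  by (simp add: zeta_def)

lemma zeta_power: "zeta n a ^ k = zeta n (int k * a)"
  by (induction k) (simp_all add: zeta_add distrib_right)

lemma zeta_eq_1_iff:
  assumes "n > 0"
  shows "zeta n a = 1 \<longleftrightarrow> n dvd a"
proof
  assume "zeta n a = 1"
  then have "cos (2 * pi * of_int a / of_int n) = 1"
    unfolding zeta_def by (metis cis.sel(1) one_complex.sel(1))
  then obtain k :: int where "2 * pi * of_int a / of_int n = of_int k * 2 * pi"
    using cos_one_2pi_int by blast
  then have "of_int a = (of_int (n * k) :: real)"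
    using assms by (simp add: field_simps)
  then have "a = n * k"
    by (simp only: of_int_eq_iff)
  then show "n dvd a"
    by simp
next
  assume "n dvd a"
  then show "zeta n a = 1"
    by (auto simp: zeta_multiple)
qed

lemma sum_zeta:
  assumes "n > 0"
  shows "(\<Sum>j\<in>{0..<n}. zeta n (j * a)) = (if n dvd a then of_int n else 0)"
proof -
  have "(\<Sum>j\<in>{0..<n}. zeta n (j * a)) = (\<Sum>j<nat n. zeta n a ^ j)"
    using assms by (simp add: sum_atLeast0_lessThan_int zeta_power)
  also have "\<dots> = (if n dvd a then of_int n else 0)"
  proof (cases "n dvd a")
    case True
    then have "zeta n a = 1"
      using zeta_eq_1_iff[OF assms] by blast
    then show ?thesis
      using True assms by simp
  next
    case False
    have "zeta n a ^ nat n = 1"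
      using assms zeta_multiple[of n a] by (simp add: zeta_power)
    then show ?thesis
      using False geometric_sum[of "zeta n a" "nat n"] by (simp add: zeta_eq_1_iff[OF assms])
  qed
  finally show ?thesis .
qed

section \<open>Integer relations among p-th roots of unity\<close>

lemma eisenstein_factor_coeff_0_dvd:
  fixes f g h :: "int poly" and p :: int
  assumes p: "prime p" and fgh: "f = g * h" and "degree g \<ge> 1" and "degree h \<ge> 1"
    and coeffs_dvd: "\<And>i. i < degree f \<Longrightarrow> p dvd coeff f i"
    and lead: "\<not> p dvd lead_coeff g"
  shows "p dvd coeff h 0"
proof (rule ccontr)
  assume h0: "\<not> p dvd coeff h 0"
  define i where "i = (LEAST i. \<not> p dvd coeff g i)"
  have gi: "\<not> p dvd coeff g i"
    unfolding i_def by (rule LeastI[of _ "degree g"]) (rule lead)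
  have below: "p dvd coeff g k" if "k < i" for k
    using that not_less_Least unfolding i_def by blast
  have "i \<le> degree g"
    unfolding i_def by (rule Least_le) (rule lead)
  moreover have "g \<noteq> 0" "h \<noteq> 0"
    using assms(3,4) by auto
  ultimately have "i < degree f"
    using fgh assms(4) degree_mult_eq[of g h] by simp
  then have "p dvd coeff f i"
    by (rule coeffs_dvd)
  moreover have "coeff f i = (\<Sum>k<i. coeff g k * coeff h (i - k)) + coeff g i * coeff h 0"
    by (simp add: fgh coeff_mult flip: lessThan_Suc_atMost)
  moreover have "p dvd (\<Sum>k<i. coeff g k * coeff h (i - k))"
    by (intro dvd_sum) (simp add: below)
  ultimately have "p dvd coeff g i * coeff h 0"
    by (simp add: dvd_add_right_iff)
  then show False
    using p gi h0 by (simp add: prime_dvd_mult_iff)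
qed

lemma eisenstein_irreducible:
  fixes f :: "int poly" and p :: int
  assumes p: "prime p" and monic: "lead_coeff f = 1" and deg: "degree f \<ge> 1"
    and coeffs_dvd: "\<And>i. i < degree f \<Longrightarrow> p dvd coeff f i"
    and const: "\<not> p\<^sup>2 dvd coeff f 0"
  shows "irreducible f"
proof (rule irreducibleI)
  show "f \<noteq> 0" "\<not> f dvd 1"
    using deg by (auto simp: is_unit_poly_iff)
  fix g h assume fgh: "f = g * h"
  have units: "lead_coeff g dvd 1" "lead_coeff h dvd 1"
    using monic fgh lead_coeff_mult[of g h] by (metis dvd_triv_left dvd_triv_right)+
  show "g dvd 1 \<or> h dvd 1"
  proof (cases "degree g = 0 \<or> degree h = 0")
    case True
    then show ?thesis
      using units by (auto elim!: degree_eq_zeroE simp: is_unit_poly_iff)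
  next
    case False
    then have degs: "degree g \<ge> 1" "degree h \<ge> 1"
      by auto
    have not_dvd_lead: "\<not> p dvd lead_coeff g" "\<not> p dvd lead_coeff h"
      using units p by (meson dvd_trans not_prime_unit)+
    have "p dvd coeff h 0"
      by (rule eisenstein_factor_coeff_0_dvd[OF p fgh degs coeffs_dvd not_dvd_lead(1)])
    moreover have "p dvd coeff g 0"
      by (rule eisenstein_factor_coeff_0_dvd[OF p _ degs(2,1) coeffs_dvd not_dvd_lead(2)])
        (simp add: fgh mult.commute)
    ultimately have "p\<^sup>2 dvd coeff f 0"
      by (simp add: fgh coeff_mult power2_eq_square mult_dvd_mono)
    with const show ?thesis
      by contradiction
  qed
qed

text \<open>\<open>((X + 1)\<^sup>p - 1) / X\<close>, which is \<open>\<Phi>\<^sub>p(X + 1)\<close> for prime p.\<close>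
definition shifted_cyclotomic :: "nat \<Rightarrow> int poly" where
  "shifted_cyclotomic p = (\<Sum>k<p. monom (int (p choose (k + 1))) k)"

lemma coeff_shifted_cyclotomic:
  "coeff (shifted_cyclotomic p) k = (if k < p then int (p choose (k + 1)) else 0)"
  by (simp add: shifted_cyclotomic_def coeff_sum coeff_monom)

lemma degree_shifted_cyclotomic:
  assumes "p \<ge> 1"
  shows "degree (shifted_cyclotomic p) = p - 1"
proof (rule antisym)
  show "degree (shifted_cyclotomic p) \<le> p - 1"
    by (rule degree_le) (auto simp: coeff_shifted_cyclotomic)
  show "p - 1 \<le> degree (shifted_cyclotomic p)"
    by (rule le_degree) (use assms in \<open>simp add: coeff_shifted_cyclotomic\<close>)
qed

lemma shifted_cyclotomic_irreducible:
  assumes p: "prime p"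
  shows "irreducible (shifted_cyclotomic p)"
proof (rule eisenstein_irreducible)
  have p2: "p \<ge> 2"
    using p prime_ge_2_nat by blast
  show "prime (int p)"
    using p by simp
  show "lead_coeff (shifted_cyclotomic p) = 1" "degree (shifted_cyclotomic p) \<ge> 1"
    using p2 by (simp_all add: degree_shifted_cyclotomic coeff_shifted_cyclotomic)
  show "int p dvd coeff (shifted_cyclotomic p) i" if "i < degree (shifted_cyclotomic p)" for i
    using that p2 dvd_choose_prime[of "i + 1" p] p
    by (simp add: degree_shifted_cyclotomic coeff_shifted_cyclotomic)
  show "\<not> (int p)\<^sup>2 dvd coeff (shifted_cyclotomic p) 0"
    using p2 by (simp add: coeff_shifted_cyclotomic power2_eq_square)
qed

lemma poly_shifted_cyclotomic:
  fixes x :: "'a :: comm_ring_1"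
  shows "x * poly (map_poly of_int (shifted_cyclotomic p)) x = (x + 1) ^ p - 1"
proof -
  have "x * poly (map_poly of_int (shifted_cyclotomic p)) x
      = (\<Sum>k<p. of_nat (p choose Suc k) * x ^ Suc k)"
    by (simp add: shifted_cyclotomic_def hom_distribs map_poly_monom poly_sum
        poly_monom sum_distrib_left ac_simps)
  also have "\<dots> = (\<Sum>k<Suc p. of_nat (p choose k) * x ^ k) - 1"
    by (subst sum.lessThan_Suc_shift) simp
  also have "\<dots> = (x + 1) ^ p - 1"
    by (simp add: binomial_ring lessThan_Suc_atMost)
  finally show ?thesis .
qed

lemma prime_poly_degree_le_common_root:
  fixes Q P :: "int poly" and \<alpha> :: "'a :: {idom, ring_char_0}"
  assumes Q: "prime_elem Q" "poly (map_poly of_int Q) \<alpha> = 0"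
    and P: "P \<noteq> 0" "poly (map_poly of_int P) \<alpha> = 0"
  shows "degree Q \<le> degree P"
  using P
proof (induction "degree P" arbitrary: P rule: less_induct)
  case less
  show ?case
  proof (rule ccontr)
    assume lt: "\<not> degree Q \<le> degree P"
    define r where "r = pseudo_mod Q P"
    obtain a s where a: "a \<noteq> 0" and div: "Polynomial.smult a Q = P * s + r"
      using pseudo_mod(1)[OF less.prems(1)] r_def by blast
    have "poly (map_poly of_int r) \<alpha> = 0"
      using arg_cong[OF div, of "\<lambda>f. poly (map_poly of_int f) \<alpha>"] Q(2) less.prems(2)
      by (simp add: hom_distribs)
    moreover have "r = 0 \<or> degree r < degree P"
      using pseudo_mod(2)[OF less.prems(1)] r_def by blast
    ultimately have "r = 0"
      using less.hyps lt by fastforce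
    then have Qs: "[:a:] * Q = P * s"
      using div by simp
    then have "Q dvd P \<or> Q dvd s"
      using Q(1) prime_elem_dvd_multD by (metis dvd_triv_right)
    then show False
    proof
      assume "Q dvd P"
      then show False
        using lt less.prems(1) dvd_imp_degree_le by blast
    next
      assume "Q dvd s"
      then obtain k where "s = Q * k" ..
      with Qs have "[:a:] * Q = (P * k) * Q"
        by (simp add: ac_simps)
      then have "[:a:] = P * k"
        using Q(1) by (metis mult_cancel_right prime_elem_def)
      then have "P dvd [:a:]"
        by simp
      then have "degree P = 0"
        using a dvd_imp_degree_le[of P "[:a:]"] by simp
      then obtain c where "P = [:c:]"
        by (rule degree_eq_zeroE)
      then show False
        using less.prems by simp
    qed
  qed
qed

text \<open>For \<open>\<zeta> = zeta p 1\<close>, \<open>\<zeta> - 1\<close> is a root of the Eisenstein polynomial \<open>\<Phi>\<^sub>p(X + 1)\<close>,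
  so no nonzero integer polynomial of degree below \<open>p - 1\<close> vanishes at \<open>\<zeta>\<close>.\<close>
lemma vanishing_sum_zeta_coeffs_eq:
  fixes p :: int and c :: "int \<Rightarrow> int"
  assumes p: "prime p" and vanish: "(\<Sum>j\<in>{0..<p}. of_int (c j) * zeta p j) = 0"
    and j: "j \<in> {0..<p}"
  shows "c j = c (p - 1)"
proof -
  define P where "P = nat p"
  have p_pos: "p > 0" and P2: "P \<ge> 2" and pP: "p = int P"
    using prime_ge_2_int[OF p] by (auto simp: P_def)
  have P_prime: "prime P"
    using p pP by simp
  define \<omega> where "\<omega> = zeta p 1"
  have \<omega>_power: "\<omega> ^ k = zeta p (int k)" for k
    by (simp add: \<omega>_def zeta_power)
  have sum_powers: "(\<Sum>k<P. \<omega> ^ k) = 0"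
    using sum_zeta[OF p_pos, of 1] p_pos p
    by (simp add: sum_atLeast0_lessThan_int \<omega>_power P_def flip: P_def)
  define \<alpha> where "\<alpha> = \<omega> - 1"
  have "\<alpha> \<noteq> 0"
    using zeta_eq_1_iff[OF p_pos, of 1] P2 pP by (simp add: \<alpha>_def \<omega>_def)
  moreover have "\<alpha> * poly (map_poly of_int (shifted_cyclotomic P)) \<alpha> = 0"
    by (simp add: poly_shifted_cyclotomic \<alpha>_def \<omega>_power pP)
  ultimately have \<alpha>_root: "poly (map_poly of_int (shifted_cyclotomic P)) \<alpha> = 0"
    by simp
  define B where "B = (\<Sum>k<P. monom (c (int k) - c (p - 1)) k)"
  have coeff_B: "coeff B k = (if k < P then c (int k) - c (p - 1) else 0)" for k
    by (simp add: B_def coeff_sum coeff_monom)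
  have "poly (map_poly of_int B) \<omega>
      = (\<Sum>k<P. of_int (c (int k)) * \<omega> ^ k) - of_int (c (p - 1)) * (\<Sum>k<P. \<omega> ^ k)"
    by (simp add: B_def hom_distribs map_poly_monom poly_sum poly_monom
        algebra_simps sum_subtractf sum_distrib_left sum_distrib_right)
  also have "\<dots> = 0"
    using vanish sum_powers p_pos by (simp add: sum_atLeast0_lessThan_int \<omega>_power P_def)
  finally have B_root: "poly (map_poly of_int B) \<omega> = 0" .
  have "B = 0"
  proof (rule ccontr)
    assume "B \<noteq> 0"
    define C where "C = B \<circ>\<^sub>p [:1, 1:]"
    have "C \<noteq> 0" "degree C = degree B"
      using \<open>B \<noteq> 0\<close> by (simp_all add: C_def pcompose_eq_0_iff degree_pcompose)
    moreover have "poly (map_poly of_int C) \<alpha> = 0"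
      using B_root by (simp add: C_def hom_distribs poly_pcompose \<alpha>_def)
    ultimately have "degree (shifted_cyclotomic P) \<le> degree B"
      using prime_poly_degree_le_common_root[OF _ \<alpha>_root, of C]
        irreducible_imp_prime_elem[OF shifted_cyclotomic_irreducible[OF P_prime]] by simp
    moreover have "degree B \<le> P - 2"
    proof (rule degree_le, intro allI impI)
      fix i assume "P - 2 < i"
      then have "P \<le> i \<or> i = P - 1"
        by linarith
      then show "coeff B i = 0"
        using P2 by (auto simp: coeff_B pP of_nat_diff)
    qed
    ultimately show False
      using P2 degree_shifted_cyclotomic[of P] by simp
  qed
  moreover have "nat j < P" "int (nat j) = j"
    using j pP by auto
  ultimately show ?thesis
    using coeff_B[of "nat j"] by simp
qed

lemma sum_zeta_by_residue:
  fixes n :: int and t :: "'a \<Rightarrow> int"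
  assumes "n > 0" and "finite A"
  shows "(\<Sum>x\<in>A. zeta n (t x)) = (\<Sum>j\<in>{0..<n}. of_nat (card {x\<in>A. t x mod n = j}) * zeta n j)"
proof -
  have "(\<Sum>x\<in>A. zeta n (t x)) = (\<Sum>j\<in>{0..<n}. \<Sum>x\<in>{x\<in>A. t x mod n = j}. zeta n (t x))"
    by (rule sum.group[symmetric]) (use assms in auto)
  also have "\<dots> = (\<Sum>j\<in>{0..<n}. \<Sum>x\<in>{x\<in>A. t x mod n = j}. zeta n j)"
    by (intro sum.cong refl) (metis (mono_tags, lifting) mem_Collect_eq zeta_mod)
  finally show ?thesis
    by simp
qed

text \<open>The Galois automorphism \<open>\<zeta> \<mapsto> \<zeta>\<^sup>l\<close> of \<open>\<rat>(\<zeta>\<^sub>p)\<close>, made explicit: the residue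
  counts of \<open>l * r\<close> are those of r permuted, and by vanishing_sum_zeta_coeffs_eq they are
  all equal.\<close>
lemma sum_zeta_dilate_eq_0:
  fixes p l :: int and r :: "'a \<Rightarrow> int"
  assumes p: "prime p" and A: "finite A" and l: "\<not> p dvd l"
    and vanish: "(\<Sum>x\<in>A. zeta p (l * r x)) = 0"
  shows "(\<Sum>x\<in>A. zeta p (r x)) = 0"
proof -
  have p_pos: "p > 0"
    using p prime_gt_0_int by blast
  define c where "c j = int (card {x\<in>A. (l * r x) mod p = j})" for j
  have c_const: "c j = c (p - 1)" if "j \<in> {0..<p}" for j
  proof (rule vanishing_sum_zeta_coeffs_eq[OF p _ that])
    show "(\<Sum>j\<in>{0..<p}. of_int (c j) * zeta p j) = 0"
      using vanish sum_zeta_by_residue[OF p_pos A, of "\<lambda>x. l * r x"] by (simp add: c_def)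
  qed
  have residue_iff: "r x mod p = j \<longleftrightarrow> (l * r x) mod p = (l * j) mod p" if "j \<in> {0..<p}" for x j
  proof
    assume "(l * r x) mod p = (l * j) mod p"
    then have "p dvd l * (r x - j)"
      by (simp add: mod_eq_dvd_iff right_diff_distrib)
    then have "p dvd r x - j"
      using p l by (simp add: prime_dvd_mult_iff)
    then show "r x mod p = j"
      using that by (simp add: mod_eq_dvd_iff[symmetric])
  qed (metis mod_mult_right_eq)
  have "(\<Sum>x\<in>A. zeta p (r x)) = (\<Sum>j\<in>{0..<p}. of_nat (card {x\<in>A. r x mod p = j}) * zeta p j)"
    by (rule sum_zeta_by_residue[OF p_pos A])
  also have "\<dots> = (\<Sum>j\<in>{0..<p}. of_int (c (p - 1)) * zeta p j)"
  proof (intro sum.cong refl)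
    fix j assume j: "j \<in> {0..<p}"
    then have "int (card {x\<in>A. r x mod p = j}) = c ((l * j) mod p)"
      by (simp add: c_def residue_iff)
    also have "\<dots> = c (p - 1)"
      using p_pos by (intro c_const) simp
    finally show "of_nat (card {x\<in>A. r x mod p = j}) * zeta p j = of_int (c (p - 1)) * zeta p j"
      by (metis of_int_of_nat_eq)
  qed
  also have "\<dots> = 0"
    using sum_zeta[OF p_pos, of 1] prime_ge_2_int[OF p] by (simp flip: sum_distrib_left)
  finally show ?thesis .
qed

section \<open>Fourier analysis on \<open>\<int>\<^sub>n\<^sup>2\<close>\<close>

lemma dvd_imp_eq_0_if_less:
  fixes a n :: int
  assumes "0 \<le> a" "a < n" "n dvd a"
  shows "a = 0"
  using assms by (metis dvd_eq_mod_eq_0 mod_pos_pos_trivial)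

definition dot2 :: "int \<times> int \<Rightarrow> int \<times> int \<Rightarrow> int" where
  "dot2 x y = fst x * fst y + snd x * snd y"

lemma dot2_commute: "dot2 x y = dot2 y x"
  by (simp add: dot2_def mult.commute)

lemma dot2_zero_left [simp]: "dot2 (0, 0) y = 0"
  by (simp add: dot2_def)

lemma dot2_scale: "dot2 (l * a1, l * a2) b = l * dot2 b (a1, a2)"
  by (simp add: dot2_def algebra_simps)

lemma zeta_dot2_mod: "zeta n (dot2 (a1 mod n, a2 mod n) b) = zeta n (dot2 (a1, a2) b)"
  by (rule zeta_mod_eq) (metis dot2_def fst_conv snd_conv mod_add_eq mod_mult_left_eq)

lemma sum_zeta_dot2:
  assumes "n > 0"
  shows "(\<Sum>u\<in>{0..<n} \<times> {0..<n}. zeta n (dot2 a u))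
    = (if n dvd fst a \<and> n dvd snd a then of_int (n\<^sup>2) else 0)"
proof -
  have "(\<Sum>u\<in>{0..<n} \<times> {0..<n}. zeta n (dot2 a u))
      = (\<Sum>u1\<in>{0..<n}. zeta n (u1 * fst a)) * (\<Sum>u2\<in>{0..<n}. zeta n (u2 * snd a))"
    by (simp add: sum_product sum.cartesian_product split_def dot2_def zeta_add mult.commute)
  then show ?thesis
    using assms by (simp add: sum_zeta power2_eq_square)
qed

text \<open>Fourier inversion at the origin: summing the transform over all of \<open>\<int>\<^sub>n\<^sup>2\<close> counts the
  points of L lying over 0.\<close>
lemma card_eq_sq_mult_card_zero_fiber:
  fixes n :: int and r :: "'a \<Rightarrow> int \<times> int"
  assumes n: "n > 0" and L: "finite L" and range: "\<And>x. x \<in> L \<Longrightarrow> r x \<in> {0..<n} \<times> {0..<n}"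
    and vanish: "\<And>u. u \<in> {0..<n} \<times> {0..<n} \<Longrightarrow> u \<noteq> (0, 0) \<Longrightarrow> (\<Sum>x\<in>L. zeta n (dot2 (r x) u)) = 0"
  shows "int (card L) = n\<^sup>2 * int (card {x\<in>L. r x = (0, 0)})"
proof -
  let ?box = "{0..<n} \<times> {0..<n}"
  have "(\<Sum>u\<in>?box. \<Sum>x\<in>L. zeta n (dot2 (r x) u))
      = (\<Sum>u\<in>?box. if u = (0, 0) then of_nat (card L) else 0)"
  proof (intro sum.cong refl)
    fix u assume "u \<in> ?box"
    then show "(\<Sum>x\<in>L. zeta n (dot2 (r x) u)) = (if u = (0, 0) then of_nat (card L) else 0)"
      using vanish[of u] by (auto simp: dot2_def)
  qed
  also have "\<dots> = of_nat (card L)"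
    using n by simp
  finally have "of_nat (card L) = (\<Sum>x\<in>L. \<Sum>u\<in>?box. zeta n (dot2 (r x) u))"
    by (simp add: sum.swap[of _ L])
  also have "\<dots> = (\<Sum>x\<in>L. if r x = (0, 0) then of_int (n\<^sup>2) else 0)"
  proof (intro sum.cong refl)
    fix x assume "x \<in> L"
    then have "n dvd fst (r x) \<and> n dvd snd (r x) \<longleftrightarrow> r x = (0, 0)"
      using range[of x] dvd_imp_eq_0_if_less[of "fst (r x)" n]
        dvd_imp_eq_0_if_less[of "snd (r x)" n] by (auto simp: prod_eq_iff)
    then show "(\<Sum>u\<in>?box. zeta n (dot2 (r x) u)) = (if r x = (0, 0) then of_int (n\<^sup>2) else 0)"
      using n by (simp add: sum_zeta_dot2)
  qed
  also have "\<dots> = of_int (n\<^sup>2 * int (card {x\<in>L. r x = (0, 0)}))"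
    using L by (simp add: sum.If_cases Int_def)
  finally have "(of_int (int (card L)) :: complex) = of_int (n\<^sup>2 * int (card {x\<in>L. r x = (0, 0)}))"
    by simp
  then show ?thesis
    by (simp only: of_int_eq_iff)
qed

lemma exists_direction_nonvanishing:
  fixes p :: int and r :: "'a \<Rightarrow> int \<times> int"
  assumes p: "prime p" and L: "finite L" and range: "\<And>x. x \<in> L \<Longrightarrow> r x \<in> {0..<p} \<times> {0..<p}"
    and not_dvd: "\<not> p\<^sup>2 dvd int (card L)"
  shows "\<exists>u \<in> {0..<p} \<times> {0..<p}. u \<noteq> (0, 0) \<and>
    (\<forall>l. \<not> p dvd l \<longrightarrow> (\<Sum>x\<in>L. zeta p (l * dot2 (r x) u)) \<noteq> 0)"
proof -
  have p_pos: "p > 0"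
    using p prime_gt_0_int by blast
  have "\<exists>u \<in> {0..<p} \<times> {0..<p}. u \<noteq> (0, 0) \<and> (\<Sum>x\<in>L. zeta p (dot2 (r x) u)) \<noteq> 0"
  proof (rule ccontr)
    assume "\<not> ?thesis"
    then have "int (card L) = p\<^sup>2 * int (card {x\<in>L. r x = (0, 0)})"
      by (intro card_eq_sq_mult_card_zero_fiber[OF p_pos L range]) auto
    with not_dvd show False
      by simp
  qed
  then obtain u where u: "u \<in> {0..<p} \<times> {0..<p}" "u \<noteq> (0, 0)"
    and nonvanishing: "(\<Sum>x\<in>L. zeta p (dot2 (r x) u)) \<noteq> 0"
    by blast
  have "(\<Sum>x\<in>L. zeta p (l * dot2 (r x) u)) \<noteq> 0" if "\<not> p dvd l" for l
    using sum_zeta_dilate_eq_0[OF p L that, of "\<lambda>x. dot2 (r x) u"] nonvanishing by blast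
  with u show ?thesis
    by blast
qed

section \<open>Spectral sets\<close>

lemma sum_nth_distinct:
  "distinct xs \<Longrightarrow> (\<Sum>j<length xs. g (xs ! j)) = (\<Sum>s\<in>set xs. g s)"
  using sum.reindex_bij_betw[OF bij_betw_nth[of xs "{..<length xs}" "set xs"], of g] by simp

lemma unimodular_orthogonal_rows_mat_inverse:
  fixes f :: "'a \<Rightarrow> 'b \<Rightarrow> complex"
  assumes xs: "distinct xs" "length xs = n" and ys: "distinct ys" "length ys = n" and "n \<noteq> 0"
    and unimodular: "\<And>l s. norm (f l s) = 1"
    and rows: "\<And>l l'. l \<in> set ys \<Longrightarrow> l' \<in> set ys \<Longrightarrow> l \<noteq> l' \<Longrightarrow>
      (\<Sum>s\<in>set xs. f l s * cnj (f l' s)) = 0"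
  shows "Matrix.mat n n (\<lambda>(i, j). f (ys ! i) (xs ! j))
    * Matrix.mat n n (\<lambda>(i, j). cnj (f (ys ! j) (xs ! i)) / of_nat n) = 1\<^sub>m n"
    (is "?A * ?B = _")
proof (rule eq_matI)
  fix i k assume "i < dim_row (1\<^sub>m n :: complex mat)" "k < dim_col (1\<^sub>m n :: complex mat)"
  then have ik: "i < n" "k < n"
    by auto
  have "(?A * ?B) $$ (i, k)
      = (\<Sum>j<length xs. f (ys ! i) (xs ! j) * cnj (f (ys ! k) (xs ! j))) / of_nat n"
    using ik xs by (simp add: scalar_prod_def atLeast0LessThan sum_divide_distrib)
  also have "\<dots> = (\<Sum>s\<in>set xs. f (ys ! i) s * cnj (f (ys ! k) s)) / of_nat n"
    using sum_nth_distinct[OF xs(1), of "\<lambda>s. f (ys ! i) s * cnj (f (ys ! k) s)"] by simp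
  also have "\<dots> = (if i = k then 1 else 0)"
  proof (cases "i = k")
    case True
    have "f l s * cnj (f l s) = 1" for l s
      using unimodular[of l s] by (simp add: complex_norm_square[symmetric])
    with True show ?thesis
      using xs(1,2) \<open>n \<noteq> 0\<close> by (simp add: distinct_card)
  next
    case False
    then have "ys ! i \<noteq> ys ! k"
      using ys ik by (simp add: nth_eq_iff_index_eq)
    then show ?thesis
      using False rows ik ys(2) by auto
  qed
  finally show "(?A * ?B) $$ (i, k) = 1\<^sub>m n $$ (i, k)"
    using ik by simp
qed simp_all

text \<open>A square matrix with pairwise orthogonal rows of unimodular entries is \<open>\<surd>n\<close> times a
  unitary matrix, so its columns are pairwise orthogonal as well (\<open>A B = 1\<close> implies \<open>B A = 1\<close>).\<close>
lemma orthogonal_columns_if_orthogonal_rows: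
  fixes f :: "'a \<Rightarrow> 'b \<Rightarrow> complex"
  assumes S: "finite S" and L: "finite L" and card: "card L = card S"
    and unimodular: "\<And>l s. norm (f l s) = 1"
    and rows: "\<And>l l'. l \<in> L \<Longrightarrow> l' \<in> L \<Longrightarrow> l \<noteq> l' \<Longrightarrow> (\<Sum>s\<in>S. f l s * cnj (f l' s)) = 0"
    and s: "s \<in> S" "s' \<in> S" "s \<noteq> s'"
  shows "(\<Sum>l\<in>L. f l s * cnj (f l s')) = 0"
proof -
  obtain xs where xs: "distinct xs" "set xs = S"
    using finite_distinct_list[OF S] by blast
  obtain ys where ys: "distinct ys" "set ys = L"
    using finite_distinct_list[OF L] by blast
  define n where "n = card S"
  have len: "length xs = n" "length ys = n"
    using xs ys card by (simp_all add: n_def distinct_card[symmetric])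
  have "n \<noteq> 0"
    using s S by (auto simp: n_def)
  define A where "A = Matrix.mat n n (\<lambda>(i, j). f (ys ! i) (xs ! j))"
  define B where "B = Matrix.mat n n (\<lambda>(i, j). cnj (f (ys ! j) (xs ! i)) / of_nat n)"
  have "A * B = 1\<^sub>m n"
    unfolding A_def B_def
    using unimodular_orthogonal_rows_mat_inverse[OF xs(1) len(1) ys(1) len(2) \<open>n \<noteq> 0\<close>]
      unimodular rows xs(2) ys(2) by blast
  then have BA: "B * A = 1\<^sub>m n"
    by (rule mat_mult_left_right_inverse[rotated 2]) (simp_all add: A_def B_def)
  obtain j k where jk: "j < n" "xs ! j = s'" "k < n" "xs ! k = s"
    using s xs len by (metis in_set_conv_nth)
  then have "j \<noteq> k"
    using s(3) by auto
  have "0 = (B * A) $$ (j, k)"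
    using BA jk \<open>j \<noteq> k\<close> by simp
  also have "\<dots> = (\<Sum>i<length ys. cnj (f (ys ! i) s') * f (ys ! i) s) / of_nat n"
    using jk len by (simp add: A_def B_def scalar_prod_def atLeast0LessThan sum_divide_distrib)
  also have "\<dots> = (\<Sum>l\<in>L. f l s * cnj (f l s')) / of_nat n"
    using sum_nth_distinct[OF ys(1), of "\<lambda>l. f l s * cnj (f l s')"] ys(2)
    by (simp add: mult.commute)
  finally show ?thesis
    using \<open>n \<noteq> 0\<close> by simp
qed

lemma chr_eq_zeta: "chr p q w x = zeta p (dot2 (fst w) (fst x)) * zeta q (dot2 (snd w) (snd x))"
  unfolding chr_def zeta_def dot2_def by (simp add: cis_mult[symmetric] ring_distribs)

lemma chr_commute: "chr p q w x = chr p q x w"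
  by (simp add: chr_eq_zeta dot2_commute)

lemma norm_chr: "norm (chr p q w x) = 1"
  by (simp add: chr_eq_zeta norm_mult)

lemma chr_gsub: "chr p q w (gsub p q x y) = chr p q w x * cnj (chr p q w y)"
proof -
  have "zeta n (dot2 a ((fst b - fst c) mod n, (snd b - snd c) mod n))
      = zeta n (dot2 a b) * cnj (zeta n (dot2 a c))" for n and a b c :: "int \<times> int"
    by (simp add: dot2_commute[of a] zeta_dot2_mod flip: zeta_diff)
      (simp add: dot2_def algebra_simps)
  then show ?thesis
    by (simp add: chr_eq_zeta gsub_def)
qed

lemma finite_grp: "finite (grp p q)"
  by (simp add: grp_def)

lemma gsub_self: "gsub p q x x = ((0, 0), (0, 0))"
  by (simp add: gsub_def)

lemma spectrum_annihilates_diffset: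
  assumes S: "S \<subseteq> grp p q" and "spectral p q S"
  shows "\<exists>\<Lambda> \<subseteq> grp p q. card \<Lambda> = card S \<and>
    (\<forall>d \<in> diffset p q S. d \<noteq> ((0, 0), (0, 0)) \<longrightarrow> chr_sum p q d \<Lambda> = 0)"
proof -
  obtain \<Lambda> where \<Lambda>: "\<Lambda> \<subseteq> grp p q" "card \<Lambda> = card S"
    and orth: "\<And>l l'. l \<in> \<Lambda> \<Longrightarrow> l' \<in> \<Lambda> \<Longrightarrow> l \<noteq> l' \<Longrightarrow> chr_sum p q (gsub p q l l') S = 0"
    using \<open>spectral p q S\<close> unfolding spectral_def by blast
  have finite: "finite S" "finite \<Lambda>"
    using S \<Lambda>(1) finite_grp by (auto intro: finite_subset)
  have annihilates: "chr_sum p q (gsub p q s s') \<Lambda> = 0" if "s \<in> S" "s' \<in> S" "s \<noteq> s'" for s s'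
  proof -
    have "(\<Sum>l\<in>\<Lambda>. chr p q l s * cnj (chr p q l s')) = 0"
    proof (rule orthogonal_columns_if_orthogonal_rows[OF finite(1,2) \<Lambda>(2) norm_chr _ that])
      fix l l' assume "l \<in> \<Lambda>" "l' \<in> \<Lambda>" "l \<noteq> l'"
      have "chr_sum p q (gsub p q l l') S = (\<Sum>s\<in>S. chr p q l s * cnj (chr p q l' s))"
        unfolding chr_sum_def by (intro sum.cong refl) (metis chr_commute chr_gsub)
      then show "(\<Sum>s\<in>S. chr p q l s * cnj (chr p q l' s)) = 0"
        using orth \<open>l \<in> \<Lambda>\<close> \<open>l' \<in> \<Lambda>\<close> \<open>l \<noteq> l'\<close> by simp
    qed
    moreover have "chr_sum p q (gsub p q s s') \<Lambda> = (\<Sum>l\<in>\<Lambda>. chr p q l s * cnj (chr p q l s'))"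
      unfolding chr_sum_def by (intro sum.cong refl) (metis chr_commute chr_gsub)
    ultimately show ?thesis
      by simp
  qed
  have "\<forall>d \<in> diffset p q S. d \<noteq> ((0, 0), (0, 0)) \<longrightarrow> chr_sum p q d \<Lambda> = 0"
  proof (intro ballI impI)
    fix d assume "d \<in> diffset p q S" "d \<noteq> ((0, 0), (0, 0))"
    then obtain s s' where "d = gsub p q s s'" "s \<in> S" "s' \<in> S" "s \<noteq> s'"
      unfolding diffset_def using gsub_self by blast
    then show "chr_sum p q d \<Lambda> = 0"
      using annihilates by blast
  qed
  with \<Lambda> show ?thesis
    by blast
qed

lemma scaled_mod_prime_nonzero:
  fixes p l u1 u2 :: int
  assumes p: "prime p" and l: "\<not> p dvd l"
    and u: "(u1, u2) \<in> {0..<p} \<times> {0..<p}" "(u1, u2) \<noteq> (0, 0)"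
  shows "((l * u1) mod p, (l * u2) mod p) \<noteq> (0, 0)"
proof
  assume "((l * u1) mod p, (l * u2) mod p) = (0, 0)"
  then have "p dvd l * u1" "p dvd l * u2"
    by (simp_all add: dvd_eq_mod_eq_0)
  then have "p dvd u1" "p dvd u2"
    using p l prime_dvd_mult_iff by blast+
  then have "u1 = 0" "u2 = 0"
    using u(1) by (auto intro: dvd_imp_eq_0_if_less)
  with u(2) show False
    by simp
qed

lemma fst_multiples_notin_diffset:
  fixes p q :: int and S \<Lambda> :: "elt set"
  assumes p: "prime p" and \<Lambda>: "\<Lambda> \<subseteq> grp p q" and not_dvd: "\<not> p\<^sup>2 dvd int (card \<Lambda>)"
    and annihilates: "\<forall>d \<in> diffset p q S. d \<noteq> ((0, 0), (0, 0)) \<longrightarrow> chr_sum p q d \<Lambda> = 0"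
  shows "\<exists>u1 u2. u1 \<in> {0..<p} \<and> u2 \<in> {0..<p} \<and> (u1, u2) \<noteq> (0, 0) \<and>
    (\<forall>l\<in>{1..<p}. (((l * u1) mod p, (l * u2) mod p), (0, 0)) \<notin> diffset p q S)"
proof -
  have range: "fst x \<in> {0..<p} \<times> {0..<p}" if "x \<in> \<Lambda>" for x
    using \<Lambda> that by (auto simp: grp_def)
  obtain u1 u2 where u: "(u1, u2) \<in> {0..<p} \<times> {0..<p}" "(u1, u2) \<noteq> (0, 0)"
    and nonvanishing: "\<And>l. \<not> p dvd l \<Longrightarrow> (\<Sum>x\<in>\<Lambda>. zeta p (l * dot2 (fst x) (u1, u2))) \<noteq> 0"
    using exists_direction_nonvanishing[where r = fst, OF p _ range not_dvd]
      finite_subset[OF \<Lambda> finite_grp] by auto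
  have "(((l * u1) mod p, (l * u2) mod p), (0, 0)) \<notin> diffset p q S" if "l \<in> {1..<p}" for l
  proof
    assume "(((l * u1) mod p, (l * u2) mod p), (0, 0)) \<in> diffset p q S"
    moreover have "\<not> p dvd l"
      using that zdvd_not_zless by auto
    ultimately have "chr_sum p q (((l * u1) mod p, (l * u2) mod p), (0, 0)) \<Lambda> = 0"
      using annihilates scaled_mod_prime_nonzero[OF p _ u] by auto
    moreover have "chr_sum p q (((l * u1) mod p, (l * u2) mod p), (0, 0)) \<Lambda>
        = (\<Sum>x\<in>\<Lambda>. zeta p (l * dot2 (fst x) (u1, u2)))"
      by (simp add: chr_sum_def chr_eq_zeta zeta_dot2_mod dot2_scale)
    ultimately show False
      using nonvanishing[OF \<open>\<not> p dvd l\<close>] by simp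
  qed
  with u show ?thesis
    by blast
qed

lemma snd_multiples_notin_diffset:
  fixes p q :: int and S \<Lambda> :: "elt set"
  assumes q: "prime q" and \<Lambda>: "\<Lambda> \<subseteq> grp p q" and not_dvd: "\<not> q\<^sup>2 dvd int (card \<Lambda>)"
    and annihilates: "\<forall>d \<in> diffset p q S. d \<noteq> ((0, 0), (0, 0)) \<longrightarrow> chr_sum p q d \<Lambda> = 0"
  shows "\<exists>v1 v2. v1 \<in> {0..<q} \<and> v2 \<in> {0..<q} \<and> (v1, v2) \<noteq> (0, 0) \<and>
    (\<forall>m\<in>{1..<q}. ((0, 0), ((m * v1) mod q, (m * v2) mod q)) \<notin> diffset p q S)"
proof -
  have range: "snd x \<in> {0..<q} \<times> {0..<q}" if "x \<in> \<Lambda>" for x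
    using \<Lambda> that by (auto simp: grp_def)
  obtain v1 v2 where v: "(v1, v2) \<in> {0..<q} \<times> {0..<q}" "(v1, v2) \<noteq> (0, 0)"
    and nonvanishing: "\<And>m. \<not> q dvd m \<Longrightarrow> (\<Sum>x\<in>\<Lambda>. zeta q (m * dot2 (snd x) (v1, v2))) \<noteq> 0"
    using exists_direction_nonvanishing[where r = snd, OF q _ range not_dvd]
      finite_subset[OF \<Lambda> finite_grp] by auto
  have "((0, 0), ((m * v1) mod q, (m * v2) mod q)) \<notin> diffset p q S" if "m \<in> {1..<q}" for m
  proof
    assume "((0, 0), ((m * v1) mod q, (m * v2) mod q)) \<in> diffset p q S"
    moreover have "\<not> q dvd m"
      using that zdvd_not_zless by auto
    ultimately have "chr_sum p q ((0, 0), ((m * v1) mod q, (m * v2) mod q)) \<Lambda> = 0"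
      using annihilates scaled_mod_prime_nonzero[OF q _ v] by auto
    moreover have "chr_sum p q ((0, 0), ((m * v1) mod q, (m * v2) mod q)) \<Lambda>
        = (\<Sum>x\<in>\<Lambda>. zeta q (m * dot2 (snd x) (v1, v2)))"
      by (simp add: chr_sum_def chr_eq_zeta zeta_dot2_mod dot2_scale)
    ultimately show False
      using nonvanishing[OF \<open>\<not> q dvd m\<close>] by simp
  qed
  with v show ?thesis
    by blast
qed

lemma prime_square_not_dvd_if_gcd_eq:
  fixes n p q :: int
  assumes p: "prime p" and q: "prime q" and "p \<noteq> q" and gcd: "gcd n (p\<^sup>2 * q\<^sup>2) = p * q"
  shows "\<not> p\<^sup>2 dvd n"
proof
  assume "p\<^sup>2 dvd n"
  then have "p\<^sup>2 dvd gcd n (p\<^sup>2 * q\<^sup>2)"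
    by (rule gcd_greatest) simp
  then have "p\<^sup>2 dvd p * q"
    by (simp only: gcd)
  then have "p dvd q"
    using prime_gt_0_int[OF p] by (simp add: power2_eq_square)
  then show False
    using primes_dvd_imp_eq[OF p q] \<open>p \<noteq> q\<close> by blast
qed

theorem lemma4p5:
  fixes p q :: int and S :: "elt set"
  assumes "prime p" and "prime q" and "p \<noteq> q"
    and "S \<subseteq> grp p q"
    and "spectral p q S"
    and "gcd (int (card S)) (p^2 * q^2) = p * q"
    and "p * q < int (card S)" and "int (card S) < p * q * min p q"
  shows "\<exists>u1 u2 v1 v2.
           u1 \<in> {0..<p} \<and> u2 \<in> {0..<p} \<and> (u1, u2) \<noteq> (0, 0) \<and>
           v1 \<in> {0..<q} \<and> v2 \<in> {0..<q} \<and> (v1, v2) \<noteq> (0, 0) \<and>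
           (\<forall>l\<in>{1..<p}. (((l * u1) mod p, (l * u2) mod p), (0, 0)) \<notin> diffset p q S) \<and>
           (\<forall>m\<in>{1..<q}. ((0, 0), ((m * v1) mod q, (m * v2) mod q)) \<notin> diffset p q S)"
proof -
  obtain \<Lambda> where \<Lambda>: "\<Lambda> \<subseteq> grp p q" "card \<Lambda> = card S"
    and annihilates: "\<forall>d \<in> diffset p q S. d \<noteq> ((0, 0), (0, 0)) \<longrightarrow> chr_sum p q d \<Lambda> = 0"
    using spectrum_annihilates_diffset[OF assms(4,5)] by blast
  have "\<not> p\<^sup>2 dvd int (card \<Lambda>)"
    using prime_square_not_dvd_if_gcd_eq[OF assms(1-3,6)] \<Lambda>(2) by simp
  moreover have "\<not> q\<^sup>2 dvd int (card \<Lambda>)"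
    using prime_square_not_dvd_if_gcd_eq[of q p "int (card S)"] assms(1-3,6) \<Lambda>(2)
    by (simp add: mult.commute)
  ultimately show ?thesis
    using fst_multiples_notin_diffset[OF assms(1) \<Lambda>(1) _ annihilates]
      snd_multiples_notin_diffset[OF assms(2) \<Lambda>(1) _ annihilates] by blast
qed

end
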